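(* (i) If $a\ge0$, there is $C(a)>0$ such that for all $t\neq0$ and $\varphi\in\mathscr S^+$: $\|S_a(t)\varphi\|_{L^\infty(\mathbb R^+)}\le C(a)|t|^{-\frac{a+1}2}\|\varphi\|_{L^1_a}$. (ii) If $-1<a<0$, there is $C(a)>0$ such that for all $t\neq0$ and $\varphi\in\mathscr S^+$: $$\|S_a(t)\varphi\,k_1\|_{L^\infty(\mathbb R^+)}\le C(a)\big(|t|^{-\frac{a+1}2}+|t|^{-\frac12}\big)\|\varphi\,u_1\|_{L^1(\mathbb R^+,dx)}.$$
   Context: $\mathbb R^+=(0,\infty)$, $d\omega_a(x)=x^a\,dx$, $L^r_a=L^r(\mathbb R^+,d\omega_a)$. $\mathscr S^+$ is the set of $\varphi\in C^\infty(\mathbb R^+;\mathbb C)$ with $\sup_{x>0}|x^m(x^{-1}\partial_x)^k\varphi(x)|<\infty$ for all $m,k\in\mathbb N_0$. For $-1<a<0$: $k_1(x)=\min\{1,x^{a/2}\}$ and $u_1(x)=\max\{x^{a/2},x^a\}$. Kernel: for $x,y>0$, $S_a(x,y,t)=\frac{e^{-i(a+1)\pi/4}}{(2|t|)^{(a+1)/2}}\big(\frac{xy}{2|t|}\big)^{\frac{1-a}2}J_{\frac{a-1}2}\big(\frac{xy}{2|t|}\big)e^{i\frac{x^2+y^2}{4|t|}}$ if $t>0$, its analogue with $e^{i(a+1)\pi/4}$ and $e^{-i\frac{x^2+y^2}{4|t|}}$ if $t<0$ ($J_\nu$ Bessel function of the first kind); $S_a(t)\varphi(x)=\int_0^\infty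 S_a(x,y,t)\varphi(y)\,d\omega_a(y)$. *)

theory Defs
  imports "HOL-Analysis.Analysis"
begin

definition besselJ :: "real \<Rightarrow> real \<Rightarrow> real" where
  "besselJ \<nu> z = (\<Sum>k. (-1) ^ k * rGamma (real k + \<nu> + 1) / fact k * (z / 2) powr (2 * real k + \<nu>))"

definition vd :: "(real \<Rightarrow> complex) \<Rightarrow> real \<Rightarrow> complex" where
  "vd f = (\<lambda>x. vector_derivative f (at x))"

definition Dop :: "(real \<Rightarrow> complex) \<Rightarrow> real \<Rightarrow> complex" where
  "Dop f = (\<lambda>x. (1 / x) *\<^sub>R vector_derivative f (at x))"

definition schwartz_plus :: "(real \<Rightarrow> complex) \<Rightarrow> bool" where
  "schwartz_plus \<phi> \<longleftrightarrow>
     (\<forall>k. \<forall>x>0. ((vd ^^ k) \<phi>) differentiable (at x)) \<and>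
     (\<forall>m k. \<exists>B. \<forall>x>0. norm ((x ^ m) *\<^sub>R ((Dop ^^ k) \<phi> x)) \<le> B)"

definition S_kernel :: "real \<Rightarrow> real \<Rightarrow> real \<Rightarrow> real \<Rightarrow> complex" where
  "S_kernel a x y t =
     (if t > 0 then cis (- (a + 1) * pi / 4) else cis ((a + 1) * pi / 4)) *
     complex_of_real ((2 * \<bar>t\<bar>) powr (- (a + 1) / 2) *
        (x * y / (2 * \<bar>t\<bar>)) powr ((1 - a) / 2) * besselJ ((a - 1) / 2) (x * y / (2 * \<bar>t\<bar>))) *
     (if t > 0 then cis ((x\<^sup>2 + y\<^sup>2) / (4 * \<bar>t\<bar>)) else cis (- (x\<^sup>2 + y\<^sup>2) / (4 * \<bar>t\<bar>)))"

definition S_op :: "real \<Rightarrow> real \<Rightarrow> (real \<Rightarrow> complex) \<Rightarrow> real \<Rightarrow> complex" where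
  "S_op a t \<phi> x = (\<integral>y\<in>{0<..}. (y powr a) *\<^sub>R (S_kernel a x y t * \<phi> y) \<partial>lborel)"

definition k1 :: "real \<Rightarrow> real \<Rightarrow> real" where
  "k1 a x = min 1 (x powr (a / 2))"

definition u1 :: "real \<Rightarrow> real \<Rightarrow> real" where
  "u1 a x = max (x powr (a / 2)) (x powr a)"

end

theory Submission
  imports Defs
begin

text \<open>
  With \<open>\<nu> = (a - 1)/2\<close> and \<open>z = xy/(2|t|)\<close> the kernel has modulus
  \<open>2^(-a) |t|^(-(a+1)/2) |g(z)|\<close>, where \<open>J\<^sub>\<nu>(z) = (z/2)^\<nu> g(z)\<close> and \<open>g\<close> is an entire
  power series in \<open>(z/2)\<^sup>2\<close>. The function \<open>u(z) = z^(\<nu>+1/2) g(z)\<close> solves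
  \<open>u'' = ((\<nu>\<^sup>2 - 1/4)/z\<^sup>2 - 1) u\<close>, and a monotone energy shows that \<open>u\<close> is bounded at
  infinity. With continuity of \<open>g\<close> near \<open>0\<close> this gives \<open>|g| \<le> K\<close> when \<open>a \<ge> 0\<close>, and
  \<open>|g(z)| \<le> K (1 + z^(-a/2))\<close> when \<open>-1 < a < 0\<close>; in the latter case
  \<open>z^(-a/2) = (2|t|)^(a/2) x^(-a/2) y^(-a/2)\<close>, and the weights \<open>k\<^sub>1(x)\<close> and \<open>u\<^sub>1(y)\<close> absorb
  the powers of \<open>x\<close> and \<open>y\<close>. Integrating these pointwise kernel bounds against \<open>\<phi>\<close>,
  which is integrable against the weights by its decay, gives both estimates.
\<close>

section \<open>Bessel functions of the first kind as power series\<close>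

definition pseries :: "(nat \<Rightarrow> real) \<Rightarrow> real \<Rightarrow> real" where
  "pseries c w = (\<Sum>k. c k * w ^ k)"

lemma has_real_derivative_pseries_half_square:
  assumes "\<And>w. summable (\<lambda>k. c k * w ^ k)"
  shows "((\<lambda>z. pseries c ((z / 2)\<^sup>2)) has_real_derivative
           z / 2 * pseries (diffs c) ((z / 2)\<^sup>2)) (at z)"
proof -
  have "(pseries c has_real_derivative pseries (diffs c) w) (at w)" for w
    unfolding pseries_def[abs_def] using assms by (rule termdiffs_strong_converges_everywhere)
  from DERIV_chain2[OF this, of "\<lambda>z. (z / 2)\<^sup>2" "z / 2" z] show ?thesis
    by (simp add: mult.commute DERIV_cong[OF DERIV_power[OF DERIV_cdivide[OF DERIV_ident]]])
qed

lemma pochhammer_ge_min_1: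
  assumes "(x::real) > 0"
  shows "pochhammer x k \<ge> min 1 x"
proof (induction k)
  case (Suc k)
  show ?case
  proof (cases "k = 0")
    case False
    then have "min 1 x * 1 \<le> pochhammer x k * (x + real k)"
      using Suc assms by (intro mult_mono) auto
    then show ?thesis by (simp add: pochhammer_Suc)
  qed simp
qed simp

lemma abs_rGamma_shift_le:
  assumes "\<nu> > -1"
  shows "\<bar>rGamma (real k + \<nu> + 1)\<bar> \<le> \<bar>rGamma (\<nu> + 1)\<bar> / min 1 (\<nu> + 1)"
proof -
  have p: "pochhammer (\<nu> + 1) k \<ge> min 1 (\<nu> + 1)"
    using assms by (intro pochhammer_ge_min_1) auto
  have "\<bar>rGamma (real k + \<nu> + 1)\<bar> * min 1 (\<nu> + 1)
          \<le> \<bar>rGamma (real k + \<nu> + 1)\<bar> * pochhammer (\<nu> + 1) k"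
    using p by (intro mult_left_mono) auto
  also have "\<dots> = \<bar>rGamma (\<nu> + 1)\<bar>"
    using pochhammer_rGamma[of "\<nu> + 1" k] p assms by (simp add: abs_mult algebra_simps)
  finally show ?thesis using assms by (simp add: field_simps)
qed

definition bessel_coeff :: "real \<Rightarrow> nat \<Rightarrow> real" where
  "bessel_coeff \<nu> k = (-1) ^ k * rGamma (real k + \<nu> + 1) / fact k"

lemma summable_bessel_coeff:
  assumes "\<nu> > -1"
  shows "summable (\<lambda>k. bessel_coeff \<nu> k * w ^ k)"
proof (rule summable_comparison_test')
  define R where "R = \<bar>rGamma (\<nu> + 1)\<bar> / min 1 (\<nu> + 1)"
  show "summable (\<lambda>k. R * (inverse (fact k) * \<bar>w\<bar> ^ k))"
    by (intro summable_mult summable_exp)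
  show "norm (bessel_coeff \<nu> k * w ^ k) \<le> R * (inverse (fact k) * \<bar>w\<bar> ^ k)" for k
  proof -
    have "norm (bessel_coeff \<nu> k * w ^ k)
        = \<bar>rGamma (real k + \<nu> + 1)\<bar> * (inverse (fact k) * \<bar>w\<bar> ^ k)"
      by (simp add: bessel_coeff_def abs_mult power_abs field_simps)
    also have "\<dots> \<le> R * (inverse (fact k) * \<bar>w\<bar> ^ k)"
      unfolding R_def using assms by (intro mult_right_mono abs_rGamma_shift_le) auto
    finally show ?thesis .
  qed
qed

lemma summable_diffs_bessel_coeff:
  "\<nu> > -1 \<Longrightarrow> summable (\<lambda>k. diffs (bessel_coeff \<nu>) k * w ^ k)"
  by (intro termdiff_converges_all summable_bessel_coeff)

lemma summable_diffs_diffs_bessel_coeff: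
  "\<nu> > -1 \<Longrightarrow> summable (\<lambda>k. diffs (diffs (bessel_coeff \<nu>)) k * w ^ k)"
  by (intro termdiff_converges_all summable_diffs_bessel_coeff)

definition bessel_reduced :: "real \<Rightarrow> real \<Rightarrow> real" where
  "bessel_reduced \<nu> z = pseries (bessel_coeff \<nu>) ((z / 2)\<^sup>2)"

lemma besselJ_eq_bessel_reduced:
  assumes "\<nu> > -1" "z > 0"
  shows "besselJ \<nu> z = (z / 2) powr \<nu> * bessel_reduced \<nu> z"
proof -
  have "(z / 2) powr (2 * real k + \<nu>) = (z / 2) powr \<nu> * ((z / 2)\<^sup>2) ^ k" for k
  proof -
    have "(z / 2) powr real (2 * k) = (z / 2) ^ (2 * k)"
      using assms by (intro powr_realpow) simp
    then show ?thesis by (simp add: powr_add power_mult)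
  qed
  then have "besselJ \<nu> z = (\<Sum>k. (z / 2) powr \<nu> * (bessel_coeff \<nu> k * ((z / 2)\<^sup>2) ^ k))"
    unfolding besselJ_def bessel_coeff_def by (simp add: ac_simps)
  also have "\<dots> = (z / 2) powr \<nu> * bessel_reduced \<nu> z"
    unfolding bessel_reduced_def pseries_def by (intro suminf_mult summable_bessel_coeff assms)
  finally show ?thesis .
qed

lemma bessel_coeff_recurrence:
  "(real k + \<nu> + 1) * diffs (bessel_coeff \<nu>) k + bessel_coeff \<nu> k = 0"
proof -
  have diffs_eq: "diffs (bessel_coeff \<nu>) k = - ((-1) ^ k * rGamma (real k + \<nu> + 1 + 1) / fact k)"
    using fact_gt_zero[of k, where 'a=real]
    by (simp add: diffs_def bessel_coeff_def add_ac)
  have c: "bessel_coeff \<nu> k = (-1) ^ k * ((real k + \<nu> + 1) * rGamma (real k + \<nu> + 1 + 1)) / fact k"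
    unfolding bessel_coeff_def rGamma_plus1 ..
  show ?thesis
    unfolding diffs_eq c by (simp add: field_simps)
qed

lemma bessel_pseries_ode:
  assumes "\<nu> > -1"
  defines "c \<equiv> bessel_coeff \<nu>"
  shows "w * pseries (diffs (diffs c)) w + (\<nu> + 1) * pseries (diffs c) w + pseries c w = 0"
proof -
  define f where "f m = real m * diffs c m * w ^ m" for m
  \<comment> \<open>the coefficients of \<open>w g''\<close>, after the index shift\<close>
  have "(\<lambda>m. f (Suc m)) = (\<lambda>m. diffs (diffs c) m * w ^ m * w)"
    unfolding f_def diffs_def by (auto simp: field_simps)
  moreover have "(\<lambda>m. diffs (diffs c) m * w ^ m * w) sums (pseries (diffs (diffs c)) w * w)"
    unfolding pseries_def c_def
    by (intro sums_mult2 summable_sums summable_diffs_diffs_bessel_coeff assms)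
  ultimately have "(\<lambda>m. f (Suc m)) sums (w * pseries (diffs (diffs c)) w)"
    by (simp add: mult.commute)
  then have "f sums (w * pseries (diffs (diffs c)) w)"
    using sums_Suc_iff[of f] by (simp add: f_def)
  moreover have "(\<lambda>m. (\<nu> + 1) * (diffs c m * w ^ m)) sums ((\<nu> + 1) * pseries (diffs c) w)"
    unfolding pseries_def c_def
    by (intro sums_mult summable_sums summable_diffs_bessel_coeff assms)
  moreover have "(\<lambda>m. c m * w ^ m) sums pseries c w"
    unfolding pseries_def c_def by (intro summable_sums summable_bessel_coeff assms)
  ultimately have "(\<lambda>m. f m + (\<nu> + 1) * (diffs c m * w ^ m) + c m * w ^ m) sums
      (w * pseries (diffs (diffs c)) w + (\<nu> + 1) * pseries (diffs c) w + pseries c w)"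
    by (intro sums_add)
  moreover have "f m + (\<nu> + 1) * (diffs c m * w ^ m) + c m * w ^ m = 0" for m
  proof -
    have "f m + (\<nu> + 1) * (diffs c m * w ^ m) + c m * w ^ m
        = w ^ m * ((real m + \<nu> + 1) * diffs c m + c m)"
      unfolding f_def by (simp add: algebra_simps)
    then show ?thesis
      unfolding c_def bessel_coeff_recurrence by simp
  qed
  ultimately show ?thesis
    by (simp add: sums_0 sums_unique2)
qed

section \<open>Boundedness of solutions of \<open>u'' = (c/z\<^sup>2 - 1) u\<close>\<close>

text \<open>For \<open>c \<le> 0\<close> the energy \<open>(1 - c/z\<^sup>2) u\<^sup>2 + u'\<^sup>2\<close> has derivative
  \<open>(2c/z\<^sup>3) u\<^sup>2 \<le> 0\<close>.\<close>
lemma normal_ode_square_le_nonpos: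
  fixes u u' :: "real \<Rightarrow> real"
  assumes u: "\<And>z. z > 0 \<Longrightarrow> (u has_real_derivative u' z) (at z)"
    and u': "\<And>z. z > 0 \<Longrightarrow> (u' has_real_derivative (c / z\<^sup>2 - 1) * u z) (at z)"
    and "c \<le> 0" "z \<ge> 1"
  shows "(u z)\<^sup>2 \<le> (1 - c) * (u 1)\<^sup>2 + (u' 1)\<^sup>2"
proof -
  define E where "E z = (1 - c / z\<^sup>2) * (u z)\<^sup>2 + (u' z)\<^sup>2" for z
  have "E z \<le> E 1"
  proof (rule DERIV_nonpos_imp_nonincreasing[OF \<open>z \<ge> 1\<close>])
    fix x :: real
    assume "1 \<le> x"
    then have "x > 0" by simp
    then have "(E has_real_derivative 2 * c / x ^ 3 * (u x)\<^sup>2) (at x)"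
      unfolding E_def[abs_def]
      by (auto intro!: derivative_eq_intros u u' simp: field_simps eval_nat_numeral)
    moreover have "2 * c / x ^ 3 * (u x)\<^sup>2 \<le> 0"
      using \<open>c \<le> 0\<close> \<open>x > 0\<close> by (simp add: mult_nonpos_nonneg divide_nonpos_pos)
    ultimately show "\<exists>y. (E has_real_derivative y) (at x) \<and> y \<le> 0" by blast
  qed
  moreover have "c * (u z)\<^sup>2 / z\<^sup>2 \<le> 0"
    using \<open>c \<le> 0\<close> by (simp add: mult_nonpos_nonneg divide_nonpos_nonneg)
  then have "(u z)\<^sup>2 \<le> (1 - c / z\<^sup>2) * (u z)\<^sup>2"
    by (simp add: algebra_simps)
  then have "(u z)\<^sup>2 \<le> E z"
    unfolding E_def by (simp add: add_increasing2)
  ultimately show ?thesis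
    unfolding E_def by simp
qed

text \<open>For \<open>c > 0\<close> and \<open>z \<ge> 1 + 2c\<close>, where \<open>q = 1 - c/z\<^sup>2 \<ge> 1/2\<close>,
  the energy \<open>u\<^sup>2 + u'\<^sup>2/q\<close> has derivative \<open>-(2c/z\<^sup>3) u'\<^sup>2/q\<^sup>2 \<le> 0\<close>.\<close>
lemma normal_ode_square_le_pos:
  fixes u u' :: "real \<Rightarrow> real"
  assumes u: "\<And>z. z > 0 \<Longrightarrow> (u has_real_derivative u' z) (at z)"
    and u': "\<And>z. z > 0 \<Longrightarrow> (u' has_real_derivative (c / z\<^sup>2 - 1) * u z) (at z)"
    and "c > 0" "z \<ge> 1 + 2 * c"
  shows "(u z)\<^sup>2 \<le> (u (1 + 2 * c))\<^sup>2 + 2 * (u' (1 + 2 * c))\<^sup>2"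
proof -
  define Z where "Z = 1 + 2 * c"
  define q where "q z = 1 - c / z\<^sup>2" for z
  have q: "q x \<ge> 1/2" if "x \<ge> Z" for x
  proof -
    have "2 * c \<le> x" "1 \<le> x" using that \<open>c > 0\<close> unfolding Z_def by auto
    then have "2 * c \<le> x\<^sup>2" using self_le_power[of x 2] by simp
    then show ?thesis
      using \<open>1 \<le> x\<close> unfolding q_def by (simp add: field_simps)
  qed
  define E where "E z = (u z)\<^sup>2 + (u' z)\<^sup>2 / q z" for z
  have "E z \<le> E Z"
  proof (rule DERIV_nonpos_imp_nonincreasing[of Z z E])
    show "Z \<le> z" using assms unfolding Z_def by simp
    fix x :: real
    assume "Z \<le> x"
    then have "x > 0" "q x > 0" using q[of x] \<open>c > 0\<close> unfolding Z_def by auto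
    have "(q has_real_derivative 2 * c / x ^ 3) (at x)"
      unfolding q_def[abs_def] using \<open>x > 0\<close>
      by (auto intro!: derivative_eq_intros simp: field_simps eval_nat_numeral)
    moreover have "(u' has_real_derivative - q x * u x) (at x)"
      using u'[OF \<open>x > 0\<close>] unfolding q_def by simp
    ultimately have "(E has_real_derivative - (2 * c / x ^ 3) * (u' x)\<^sup>2 / (q x)\<^sup>2) (at x)"
      unfolding E_def[abs_def] using \<open>x > 0\<close> \<open>q x > 0\<close>
      by (auto intro!: derivative_eq_intros u simp: field_simps eval_nat_numeral)
    moreover have "- (2 * c / x ^ 3) * (u' x)\<^sup>2 / (q x)\<^sup>2 \<le> 0"
      using \<open>c > 0\<close> \<open>x > 0\<close> by simp
    ultimately show "\<exists>y. (E has_real_derivative y) (at x) \<and> y \<le> 0" by blast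
  qed
  moreover have "1 * (u' Z)\<^sup>2 \<le> (2 * q Z) * (u' Z)\<^sup>2"
    using q[of Z] by (intro mult_right_mono) auto
  then have "(u' Z)\<^sup>2 / q Z \<le> 2 * (u' Z)\<^sup>2"
    using q[of Z] by (simp add: field_simps)
  moreover have "0 \<le> (u' z)\<^sup>2 / q z"
    using q[of z] assms unfolding Z_def by simp
  ultimately show ?thesis
    unfolding E_def Z_def[symmetric] by linarith
qed

lemma normal_ode_bounded_at_top:
  fixes u u' :: "real \<Rightarrow> real"
  assumes u: "\<And>z. z > 0 \<Longrightarrow> (u has_real_derivative u' z) (at z)"
    and u': "\<And>z. z > 0 \<Longrightarrow> (u' has_real_derivative (c / z\<^sup>2 - 1) * u z) (at z)"
  shows "\<exists>Z\<ge>1. \<exists>M. \<forall>z\<ge>Z. \<bar>u z\<bar> \<le> M"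
proof -
  obtain Z B where "Z \<ge> 1" and B: "\<And>z. z \<ge> Z \<Longrightarrow> (u z)\<^sup>2 \<le> B"
  proof (cases "c \<le> 0")
    case True
    then show ?thesis
      using that normal_ode_square_le_nonpos[OF u u' True] by blast
  next
    case False
    then have "c > 0" by simp
    show ?thesis
      using normal_ode_square_le_pos[OF u u' \<open>c > 0\<close>] \<open>c > 0\<close>
      by (intro that[of "1 + 2 * c"]) auto
  qed
  have "\<bar>u z\<bar> \<le> sqrt B" if "z \<ge> Z" for z
    using real_sqrt_le_mono[OF B[OF that]] by simp
  then show ?thesis
    using \<open>Z \<ge> 1\<close> by blast
qed

section \<open>Bounds for Bessel functions\<close>

text \<open>\<open>bessel_normal \<nu> z = 2\<^sup>\<nu> \<surd>z J\<^sub>\<nu>(z)\<close> solves the Liouville normal form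
  \<open>u'' = ((\<nu>\<^sup>2 - 1/4)/z\<^sup>2 - 1) u\<close> of Bessel's equation.\<close>
definition bessel_normal :: "real \<Rightarrow> real \<Rightarrow> real" where
  "bessel_normal \<nu> z = z powr (\<nu> + 1/2) * bessel_reduced \<nu> z"

definition bessel_normal' :: "real \<Rightarrow> real \<Rightarrow> real" where
  "bessel_normal' \<nu> z =
     (\<nu> + 1/2) * z powr (\<nu> - 1/2) * bessel_reduced \<nu> z
     + z powr (\<nu> + 1/2) * (z / 2) * pseries (diffs (bessel_coeff \<nu>)) ((z / 2)\<^sup>2)"

lemma has_real_derivative_bessel_normal:
  assumes "\<nu> > -1" "z > 0"
  shows "(bessel_normal \<nu> has_real_derivative bessel_normal' \<nu> z) (at z)"
  unfolding bessel_normal_def[abs_def] bessel_normal'_def bessel_reduced_def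
  using has_real_derivative_pseries_half_square[OF summable_bessel_coeff[OF assms(1)]] assms
  by (auto intro!: derivative_eq_intros simp: field_simps)

lemma has_real_derivative_bessel_normal':
  assumes "\<nu> > -1" "z > 0"
  shows "(bessel_normal' \<nu> has_real_derivative
           ((\<nu>\<^sup>2 - 1/4) / z\<^sup>2 - 1) * bessel_normal \<nu> z) (at z)"
proof -
  define c where "c = bessel_coeff \<nu>"
  define G0 G1 G2 where "G0 = pseries c ((z / 2)\<^sup>2)" and "G1 = pseries (diffs c) ((z / 2)\<^sup>2)"
    and "G2 = pseries (diffs (diffs c)) ((z / 2)\<^sup>2)"
  define P where "P = z powr (\<nu> + 1/2)"
  have deriv: "(bessel_normal' \<nu> has_real_derivative
      (\<nu> + 1/2) * ((\<nu> - 1/2) * z powr (\<nu> - 1/2 - 1) * G0 + z powr (\<nu> - 1/2) * (z / 2 * G1))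
      + ((\<nu> + 1/2) * z powr (\<nu> - 1/2) * (z / 2) * G1 + P * (1 / 2) * G1
         + P * (z / 2) * (z / 2 * G2))) (at z)"
    unfolding bessel_normal'_def[abs_def] bessel_reduced_def G0_def G1_def G2_def c_def P_def
    using has_real_derivative_pseries_half_square[OF summable_bessel_coeff[OF assms(1)]]
      has_real_derivative_pseries_half_square[OF summable_diffs_bessel_coeff[OF assms(1)]]
      assms
    by (auto intro!: derivative_eq_intros simp: field_simps)
  have "z powr (\<nu> - 1/2) = P / z" "z powr (\<nu> - 1/2 - 1) = P / z\<^sup>2"
    unfolding P_def using assms(2) powr_diff[of z "\<nu> + 1/2" 1] powr_diff[of z "\<nu> + 1/2" 2]
    by (simp_all add: powr_numeral)
  note deriv = deriv[unfolded this]
  have normal: "bessel_normal \<nu> z = P * G0"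
    unfolding bessel_normal_def bessel_reduced_def P_def G0_def c_def ..
  have ode: "G0 = - ((z / 2)\<^sup>2 * G2) - (\<nu> + 1) * G1"
    using bessel_pseries_ode[OF assms(1), of "(z / 2)\<^sup>2"] unfolding G0_def G1_def G2_def c_def
    by (simp add: algebra_simps)
  show ?thesis
    unfolding normal ode
    using assms(2) by (intro DERIV_cong[OF deriv[unfolded ode]]) (simp add: field_simps power2_eq_square)
qed

lemma bessel_reduced_bounds:
  assumes "\<nu> > -1"
  obtains Z K where "Z \<ge> 1"
    and "\<And>z. 0 < z \<Longrightarrow> z \<le> Z \<Longrightarrow> \<bar>bessel_reduced \<nu> z\<bar> \<le> K"
    and "\<And>z. z \<ge> Z \<Longrightarrow> z powr (\<nu> + 1/2) * \<bar>bessel_reduced \<nu> z\<bar> \<le> K"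
proof -
  obtain Z M where "Z \<ge> 1" and M: "\<And>z. z \<ge> Z \<Longrightarrow> \<bar>bessel_normal \<nu> z\<bar> \<le> M"
    using normal_ode_bounded_at_top[OF has_real_derivative_bessel_normal has_real_derivative_bessel_normal']
      assms by blast
  have "continuous_on {0..Z} (bessel_reduced \<nu>)"
    using has_real_derivative_pseries_half_square[OF summable_bessel_coeff[OF assms]]
    unfolding bessel_reduced_def[abs_def]
    by (intro continuous_at_imp_continuous_on) (blast intro: DERIV_isCont)
  then have "bounded (bessel_reduced \<nu> ` {0..Z})"
    by (intro compact_imp_bounded compact_continuous_image compact_Icc)
  then obtain G where G: "\<And>z. z \<in> {0..Z} \<Longrightarrow> \<bar>bessel_reduced \<nu> z\<bar> \<le> G"
    unfolding bounded_iff by force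
  show ?thesis
  proof (rule that[of Z "max G M"])
    show "\<bar>bessel_reduced \<nu> z\<bar> \<le> max G M" if "0 < z" "z \<le> Z" for z
      using G[of z] that by auto
    show "z powr (\<nu> + 1/2) * \<bar>bessel_reduced \<nu> z\<bar> \<le> max G M" if "z \<ge> Z" for z
      using M[OF that] \<open>Z \<ge> 1\<close> that by (simp add: bessel_normal_def abs_mult)
  qed fact
qed

lemma bessel_reduced_bounded:
  assumes "\<nu> \<ge> -1/2"
  obtains K where "K > 0" "\<And>z. z > 0 \<Longrightarrow> \<bar>bessel_reduced \<nu> z\<bar> \<le> K"
proof -
  have "\<nu> > -1" using assms by simp
  then obtain Z K where "Z \<ge> 1"
    and small: "\<And>z. 0 < z \<Longrightarrow> z \<le> Z \<Longrightarrow> \<bar>bessel_reduced \<nu> z\<bar> \<le> K"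
    and large: "\<And>z. z \<ge> Z \<Longrightarrow> z powr (\<nu> + 1/2) * \<bar>bessel_reduced \<nu> z\<bar> \<le> K"
    using bessel_reduced_bounds by blast
  have "\<bar>bessel_reduced \<nu> z\<bar> \<le> max 1 K" if "z > 0" for z
  proof (cases "z \<le> Z")
    case False
    then have "1 \<le> z powr (\<nu> + 1/2)"
      using \<open>Z \<ge> 1\<close> assms by (intro ge_one_powr_ge_zero) auto
    then have "\<bar>bessel_reduced \<nu> z\<bar> \<le> z powr (\<nu> + 1/2) * \<bar>bessel_reduced \<nu> z\<bar>"
      by (simp add: mult_le_cancel_right1)
    then show ?thesis using large[of z] False by simp
  qed (use small[OF that] in simp)
  then show ?thesis by (intro that[of "max 1 K"]) auto
qed

lemma bessel_reduced_le:
  assumes "\<nu> > -1"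
  obtains K where "K > 0"
    "\<And>z. z > 0 \<Longrightarrow> \<bar>bessel_reduced \<nu> z\<bar> \<le> K * (1 + z powr - (\<nu> + 1/2))"
proof -
  obtain Z K where "Z \<ge> 1"
    and small: "\<And>z. 0 < z \<Longrightarrow> z \<le> Z \<Longrightarrow> \<bar>bessel_reduced \<nu> z\<bar> \<le> K"
    and large: "\<And>z. z \<ge> Z \<Longrightarrow> z powr (\<nu> + 1/2) * \<bar>bessel_reduced \<nu> z\<bar> \<le> K"
    using bessel_reduced_bounds[OF assms] by blast
  have "\<bar>bessel_reduced \<nu> z\<bar> \<le> max 1 K * (1 + z powr - (\<nu> + 1/2))" if "z > 0" for z
  proof (cases "z \<le> Z")
    case True
    have "\<bar>bessel_reduced \<nu> z\<bar> \<le> max 1 K * 1"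
      using small[OF that True] by simp
    also have "\<dots> \<le> max 1 K * (1 + z powr - (\<nu> + 1/2))"
      by (intro mult_left_mono) auto
    finally show ?thesis .
  next
    case False
    have "\<bar>bessel_reduced \<nu> z\<bar>
        = z powr - (\<nu> + 1/2) * (z powr (\<nu> + 1/2) * \<bar>bessel_reduced \<nu> z\<bar>)"
      using that by (simp add: powr_minus field_simps)
    also have "\<dots> \<le> z powr - (\<nu> + 1/2) * max 1 K"
      using large[of z] False by (intro mult_left_mono) auto
    also have "\<dots> \<le> max 1 K * (1 + z powr - (\<nu> + 1/2))"
      by (simp add: algebra_simps)
    finally show ?thesis .
  qed
  then show ?thesis by (intro that[of "max 1 K"]) auto
qed

section \<open>Pointwise bounds for the kernel\<close>

lemma norm_S_kernel:
  assumes "t \<noteq> 0" "x > 0" "y > 0" "a > -1"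
  shows "norm (S_kernel a x y t) = 2 powr - a * \<bar>t\<bar> powr (- (a + 1) / 2) *
    \<bar>bessel_reduced ((a - 1) / 2) (x * y / (2 * \<bar>t\<bar>))\<bar>"
proof -
  define z where "z = x * y / (2 * \<bar>t\<bar>)"
  have "z > 0" unfolding z_def using assms by simp
  have "z powr ((1 - a) / 2) * (z / 2) powr ((a - 1) / 2)
      = z powr ((1 - a) / 2 + (a - 1) / 2) / 2 powr ((a - 1) / 2)"
    using \<open>z > 0\<close> by (simp add: powr_divide powr_add)
  also have "\<dots> = 2 powr ((1 - a) / 2)"
    using \<open>z > 0\<close> powr_minus_divide[of 2 "(a - 1) / 2"]
    by (simp add: minus_divide_left add_divide_distrib [symmetric])
  finally have powers: "z powr ((1 - a) / 2) * (z / 2) powr ((a - 1) / 2) = 2 powr ((1 - a) / 2)" .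
  have "norm (S_kernel a x y t) =
      \<bar>(2 * \<bar>t\<bar>) powr (- (a + 1) / 2) * z powr ((1 - a) / 2) * besselJ ((a - 1) / 2) z\<bar>"
    unfolding S_kernel_def z_def[symmetric] norm_mult norm_of_real by simp
  also have "\<dots> = (2 * \<bar>t\<bar>) powr (- (a + 1) / 2) * (z powr ((1 - a) / 2) * (z / 2) powr ((a - 1) / 2))
        * \<bar>bessel_reduced ((a - 1) / 2) z\<bar>"
    using \<open>z > 0\<close> assms(4) by (simp add: besselJ_eq_bessel_reduced abs_mult mult_ac)
  also have "\<dots> = 2 powr - a * \<bar>t\<bar> powr (- (a + 1) / 2) * \<bar>bessel_reduced ((a - 1) / 2) z\<bar>"
    unfolding powers
    using assms(1) by (simp add: powr_mult powr_add [symmetric] field_simps)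
  finally show ?thesis
    unfolding z_def .
qed

lemma norm_S_kernel_le:
  assumes "a \<ge> 0"
  obtains C where "C > 0"
    "\<And>t x y. t \<noteq> 0 \<Longrightarrow> x > 0 \<Longrightarrow> y > 0 \<Longrightarrow>
       norm (S_kernel a x y t) \<le> C * \<bar>t\<bar> powr (- (a + 1) / 2)"
proof -
  obtain K where "K > 0" and K: "\<And>z. z > 0 \<Longrightarrow> \<bar>bessel_reduced ((a - 1) / 2) z\<bar> \<le> K"
    using bessel_reduced_bounded[of "(a - 1) / 2"] assms by auto
  show ?thesis
  proof (rule that[of "2 powr - a * K"])
    fix t x y :: real
    assume "t \<noteq> 0" "x > 0" "y > 0"
    then have "norm (S_kernel a x y t) = 2 powr - a * \<bar>t\<bar> powr (- (a + 1) / 2) *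
        \<bar>bessel_reduced ((a - 1) / 2) (x * y / (2 * \<bar>t\<bar>))\<bar>"
      using assms by (intro norm_S_kernel) auto
    also have "\<dots> \<le> 2 powr - a * \<bar>t\<bar> powr (- (a + 1) / 2) * K"
      using \<open>t \<noteq> 0\<close> \<open>x > 0\<close> \<open>y > 0\<close> by (intro mult_left_mono K) auto
    finally show "norm (S_kernel a x y t) \<le> 2 powr - a * K * \<bar>t\<bar> powr (- (a + 1) / 2)"
      by (simp add: mult_ac)
  qed (use \<open>K > 0\<close> in simp)
qed

lemma k1_mult_powr_le_u1:
  assumes "x > 0"
  shows "k1 a x * y powr a \<le> u1 a y"
proof -
  have "k1 a x * y powr a \<le> 1 * u1 a y"
    using assms by (intro mult_mono) (auto simp: k1_def u1_def)
  then show ?thesis by simp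
qed

lemma k1_u1_cross_term_le:
  assumes "a \<le> 0" "t \<noteq> 0" "x > 0" "y > 0"
  shows "\<bar>t\<bar> powr (- (a + 1) / 2) * (x * y / (2 * \<bar>t\<bar>)) powr (- a / 2) * (k1 a x * y powr a)
    \<le> \<bar>t\<bar> powr (- 1 / 2) * u1 a y"
proof -
  have "\<bar>t\<bar> powr (- (a + 1) / 2) * (x * y / (2 * \<bar>t\<bar>)) powr (- a / 2) * (k1 a x * y powr a)
      = 2 powr (a / 2) * \<bar>t\<bar> powr (- 1 / 2) * (k1 a x * x powr (- a / 2)) * y powr (a / 2)"
    using assms by (simp add: powr_divide powr_mult powr_minus powr_add [symmetric] field_simps)
  also have "\<dots> \<le> 1 * \<bar>t\<bar> powr (- 1 / 2) * 1 * u1 a y"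
  proof (intro mult_mono)
    show "2 powr (a / 2) \<le> 1"
      using powr_mono[of "a / 2" 0 2] assms(1) by simp
    show "k1 a x * x powr (- a / 2) \<le> 1"
      using assms(3) by (auto simp: k1_def min_mult_distrib_right powr_add [symmetric] intro: min.coboundedI2)
  qed (auto simp: k1_def u1_def)
  finally show ?thesis
    by simp
qed

lemma norm_S_kernel_weighted_le:
  assumes "- 1 < a" "a < 0"
  obtains C where "C > 0"
    "\<And>t x y. t \<noteq> 0 \<Longrightarrow> x > 0 \<Longrightarrow> y > 0 \<Longrightarrow>
       k1 a x * (y powr a * norm (S_kernel a x y t))
         \<le> C * (\<bar>t\<bar> powr (- (a + 1) / 2) + \<bar>t\<bar> powr (- 1 / 2)) * u1 a y"
proof -
  have exponent: "- ((a - 1) / 2 + 1/2) = - a / 2"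
    by (simp add: field_simps)
  obtain K where "K > 0"
    and K: "\<And>z. z > 0 \<Longrightarrow>
      \<bar>bessel_reduced ((a - 1) / 2) z\<bar> \<le> K * (1 + z powr (- a / 2))"
    using bessel_reduced_le[of "(a - 1) / 2"] assms unfolding exponent by auto
  define C where "C = 2 powr - a * K"
  have "k1 a x * (y powr a * norm (S_kernel a x y t))
      \<le> C * (\<bar>t\<bar> powr (- (a + 1) / 2) + \<bar>t\<bar> powr (- 1 / 2)) * u1 a y"
    if "t \<noteq> 0" "x > 0" "y > 0" for t x y
  proof -
    define z where "z = x * y / (2 * \<bar>t\<bar>)"
    define e where "e = - (a + 1) / 2"
    define w where "w = k1 a x * y powr a"
    have "w \<ge> 0"
      unfolding w_def k1_def using \<open>x > 0\<close> by simp
    have "k1 a x * (y powr a * norm (S_kernel a x y t))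
        = 2 powr - a * \<bar>t\<bar> powr e * \<bar>bessel_reduced ((a - 1) / 2) z\<bar> * w"
      using that assms unfolding z_def e_def w_def by (simp add: norm_S_kernel mult_ac)
    also have "\<dots> \<le> 2 powr - a * \<bar>t\<bar> powr e * (K * (1 + z powr (- a / 2))) * w"
      using that \<open>w \<ge> 0\<close> unfolding z_def by (intro mult_right_mono mult_left_mono K) auto
    also have "\<dots> = C * (\<bar>t\<bar> powr e * w + \<bar>t\<bar> powr e * z powr (- a / 2) * w)"
      unfolding C_def by (simp add: algebra_simps)
    also have "\<dots> \<le> C * (\<bar>t\<bar> powr e * u1 a y + \<bar>t\<bar> powr (- 1 / 2) * u1 a y)"
      using k1_mult_powr_le_u1 k1_u1_cross_term_le \<open>K > 0\<close> that assms
      unfolding C_def z_def e_def w_def by (intro mult_left_mono add_mono) auto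
    finally show ?thesis
      unfolding e_def by (simp add: algebra_simps)
  qed
  moreover have "C > 0"
    unfolding C_def using \<open>K > 0\<close> by simp
  ultimately show ?thesis
    using that by blast
qed

section \<open>Integrals against Schwartz functions\<close>

lemma set_integrable_lborel_powr:
  assumes "S \<in> sets borel" "S \<subseteq> {0<..}" "(\<lambda>y. y powr p) integrable_on S"
  shows "set_integrable lborel S (\<lambda>y::real. y powr p)"
proof -
  have "(\<lambda>y. y powr p) absolutely_integrable_on S"
    using assms(3) by (rule nonnegative_absolutely_integrable_1) auto
  moreover have "continuous_on S (\<lambda>y. y powr p)"
    using assms(2) by (intro continuous_intros) auto
  from borel_measurable_continuous_on_indicator[OF assms(1) this]
  have "(\<lambda>y. indicator S y *\<^sub>R y powr p) \<in> borel_measurable lborel"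
    by simp
  ultimately show ?thesis
    unfolding set_integrable_def absolutely_integrable_on_def by (simp add: integrable_completion)
qed

lemma set_integrable_powr_0_1:
  "p > -1 \<Longrightarrow> set_integrable lborel {0<..1} (\<lambda>y::real. y powr p)"
  by (intro set_integrable_lborel_powr integrable_on_powr_from_0') auto

lemma set_integrable_powr_1_infinity:
  assumes "p < -1"
  shows "set_integrable lborel {1<..} (\<lambda>y::real. y powr p)"
proof -
  have "(\<lambda>y. y powr p) integrable_on {1..}"
    using has_integral_powr_to_inf[OF assms, of 1] unfolding integrable_on_def by auto
  then have "set_integrable lborel {1..} (\<lambda>y::real. y powr p)"
    by (intro set_integrable_lborel_powr) auto
  then show ?thesis
    by (rule set_integrable_subset) auto
qed

lemma schwartz_plus_continuous_on: "schwartz_plus \<phi> \<Longrightarrow> continuous_on {0<..} \<phi>"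
  unfolding schwartz_plus_def
  by (intro continuous_at_imp_continuous_on ballI differentiable_imp_continuous_within)
     (metis funpow_0 greaterThan_iff)

lemma schwartz_plus_decay:
  assumes "schwartz_plus \<phi>"
  obtains B where "\<And>x. x > 0 \<Longrightarrow> norm (\<phi> x) * x ^ m \<le> B"
proof -
  obtain B where "\<forall>x>0. norm (x ^ m *\<^sub>R (Dop ^^ 0) \<phi> x) \<le> B"
    using assms unfolding schwartz_plus_def by blast
  then show ?thesis
    using that[of B] by (simp add: mult.commute)
qed

lemma schwartz_plus_powr_integrable:
  assumes "schwartz_plus \<phi>" "p > -1"
  shows "set_integrable lborel {0<..} (\<lambda>y. norm (\<phi> y) * y powr p)"
proof -
  have cont: "continuous_on {0<..} (\<lambda>y. norm (\<phi> y) * y powr p)"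
    using schwartz_plus_continuous_on[OF assms(1)] by (intro continuous_intros) auto
  have meas: "set_borel_measurable lborel A (\<lambda>y. norm (\<phi> y) * y powr p)"
    if "A \<in> sets borel" "A \<subseteq> {0<..}" for A
    using set_measurable_continuous_on[OF that(1) continuous_on_subset[OF cont that(2)]]
    unfolding set_borel_measurable_def by simp
  obtain B0 where B0: "\<And>y. y > 0 \<Longrightarrow> norm (\<phi> y) * y ^ 0 \<le> B0"
    using schwartz_plus_decay[OF assms(1)] by blast
  define m where "m = nat \<lceil>p\<rceil> + 2"
  obtain B where B: "\<And>y. y > 0 \<Longrightarrow> norm (\<phi> y) * y ^ m \<le> B"
    using schwartz_plus_decay[OF assms(1)] by blast
  have "0 \<le> B"
    using B[of 1] norm_ge_zero[of "\<phi> 1"] by (simp del: norm_ge_zero)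
  have "set_integrable lborel {0<..1} (\<lambda>y. norm (\<phi> y) * y powr p)"
  proof (rule set_integrable_bound[OF _ meas])
    show "set_integrable lborel {0<..1} (\<lambda>y. B0 * y powr p)"
      using set_integrable_powr_0_1[OF assms(2)] by (rule set_integrable_mult_right)
    show "AE y in lborel. y \<in> {0<..1} \<longrightarrow>
        norm (norm (\<phi> y) * y powr p) \<le> norm (B0 * y powr p)"
      using B0 by (intro AE_I2) (force simp: abs_mult intro!: mult_right_mono)
  qed auto
  moreover have "set_integrable lborel {1<..} (\<lambda>y. norm (\<phi> y) * y powr p)"
  proof (rule set_integrable_bound[OF _ meas])
    show "set_integrable lborel {1<..} (\<lambda>y. B * y powr -2)"
      using set_integrable_powr_1_infinity[of "-2"] by (intro set_integrable_mult_right) auto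
    have "norm (\<phi> y) * y powr p \<le> B * y powr -2" if "y > 1" for y
    proof -
      have "norm (\<phi> y) * y powr p = (norm (\<phi> y) * y ^ m) * y powr (p - m)"
        using that by (simp add: powr_diff powr_realpow)
      also have "\<dots> \<le> B * y powr -2"
        using B[of y] \<open>0 \<le> B\<close> that unfolding m_def
        by (intro mult_mono powr_mono) (auto, linarith)
      finally show ?thesis .
    qed
    then show "AE y in lborel. y \<in> {1<..} \<longrightarrow>
        norm (norm (\<phi> y) * y powr p) \<le> norm (B * y powr -2)"
      using \<open>0 \<le> B\<close> by (intro AE_I2) (auto simp: abs_mult)
  qed auto
  ultimately have "set_integrable lborel ({0<..1} \<union> {1<..}) (\<lambda>y. norm (\<phi> y) * y powr p)"
    by (rule set_integrable_Un) auto
  also have "{0<..1} \<union> {1<..} = {0::real<..}"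
    by auto
  finally show ?thesis .
qed

lemma schwartz_plus_u1_integrable:
  assumes "schwartz_plus \<phi>" "a > -1"
  shows "set_integrable lborel {0<..} (\<lambda>y. norm (\<phi> y) * u1 a y)"
proof (rule set_integrable_bound)
  show "set_integrable lborel {0<..} (\<lambda>y. norm (\<phi> y) * y powr a + norm (\<phi> y) * y powr (a / 2))"
    using assms by (intro set_integral_add schwartz_plus_powr_integrable) auto
  have "continuous_on {0<..} (\<lambda>y. norm (\<phi> y) * u1 a y)"
    unfolding u1_def using schwartz_plus_continuous_on[OF assms(1)]
    by (intro continuous_intros) auto
  from set_measurable_continuous_on[OF _ this]
  show "set_borel_measurable lborel {0<..} (\<lambda>y. norm (\<phi> y) * u1 a y)"
    unfolding set_borel_measurable_def by simp
  show "AE y in lborel. y \<in> {0<..} \<longrightarrow>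
      norm (norm (\<phi> y) * u1 a y) \<le> norm (norm (\<phi> y) * y powr a + norm (\<phi> y) * y powr (a / 2))"
    by (intro AE_I2) (auto simp: u1_def max_def abs_mult distrib_left [symmetric] intro!: mult_left_mono)
qed

lemma norm_set_integral_le:
  fixes f :: "'a \<Rightarrow> 'b::{banach, second_countable_topology}"
  assumes "set_integrable M A g" "\<And>x. x \<in> A \<Longrightarrow> norm (f x) \<le> g x"
  shows "norm (LINT x:A|M. f x) \<le> (LINT x:A|M. g x)"
  unfolding set_lebesgue_integral_def
proof (rule order_trans[OF integral_norm_bound integral_mono_AE'])
  show "integrable M (\<lambda>x. indicator A x *\<^sub>R g x)"
    using assms(1) unfolding set_integrable_def .
  have "0 \<le> g x" if "x \<in> A" for x
    using assms(2)[OF that] norm_ge_zero order_trans by blast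
  then show "AE x in M. norm (indicator A x *\<^sub>R f x) \<le> indicator A x *\<^sub>R g x"
    "AE x in M. 0 \<le> indicator A x *\<^sub>R g x"
    using assms(2) by (auto intro!: AE_I2 simp: indicator_def)
qed

lemma norm_S_op_le:
  assumes "set_integrable lborel {0<..} (\<lambda>y. norm (\<phi> y) * w y)"
    and "\<And>y. y > 0 \<Longrightarrow> y powr a * norm (S_kernel a x y t) \<le> c * w y"
  shows "norm (S_op a t \<phi> x) \<le> c * (\<integral>y\<in>{0<..}. norm (\<phi> y) * w y \<partial>lborel)"
proof -
  have "norm (S_op a t \<phi> x) \<le> (\<integral>y\<in>{0<..}. c * (norm (\<phi> y) * w y) \<partial>lborel)"
    unfolding S_op_def
  proof (rule norm_set_integral_le)
    show "set_integrable lborel {0<..} (\<lambda>y. c * (norm (\<phi> y) * w y))"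
      using assms(1) by (rule set_integrable_mult_right)
    fix y :: real
    assume "y \<in> {0<..}"
    then have "y powr a * norm (S_kernel a x y t) * norm (\<phi> y) \<le> c * w y * norm (\<phi> y)"
      using assms(2) by (intro mult_right_mono) auto
    then show "norm (y powr a *\<^sub>R (S_kernel a x y t * \<phi> y)) \<le> c * (norm (\<phi> y) * w y)"
      by (simp add: norm_mult mult_ac)
  qed
  then show ?thesis
    by simp
qed

lemma S_op_L1_Linfty_estimate:
  assumes "a \<ge> 0"
  shows "\<exists>C>0. \<forall>t \<phi>. t \<noteq> 0 \<and> schwartz_plus \<phi> \<longrightarrow>
      (AE x in lborel. x > 0 \<longrightarrow> norm (S_op a t \<phi> x) \<le> C * \<bar>t\<bar> powr (- (a + 1) / 2) *
        (\<integral>y\<in>{0<..}. norm (\<phi> y) * y powr a \<partial>lborel))"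
proof -
  obtain C where "C > 0" and kernel: "\<And>t x y. t \<noteq> 0 \<Longrightarrow> x > 0 \<Longrightarrow> y > 0 \<Longrightarrow>
      norm (S_kernel a x y t) \<le> C * \<bar>t\<bar> powr (- (a + 1) / 2)"
    using norm_S_kernel_le[OF assms] by blast
  have "norm (S_op a t \<phi> x) \<le> C * \<bar>t\<bar> powr (- (a + 1) / 2) *
      (\<integral>y\<in>{0<..}. norm (\<phi> y) * y powr a \<partial>lborel)"
    if "t \<noteq> 0" "schwartz_plus \<phi>" "x > 0" for t \<phi> x
  proof (rule norm_S_op_le)
    show "set_integrable lborel {0<..} (\<lambda>y. norm (\<phi> y) * y powr a)"
      using that assms by (intro schwartz_plus_powr_integrable) auto
    show "y powr a * norm (S_kernel a x y t) \<le> C * \<bar>t\<bar> powr (- (a + 1) / 2) * y powr a"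
      if "y > 0" for y
      using mult_left_mono[OF kernel powr_ge_zero] \<open>t \<noteq> 0\<close> \<open>x > 0\<close> that
      by (simp add: mult_ac)
  qed
  then show ?thesis
    using \<open>C > 0\<close> by blast
qed

lemma S_op_weighted_L1_Linfty_estimate:
  assumes "- 1 < a" "a < 0"
  shows "\<exists>C>0. \<forall>t \<phi>. t \<noteq> 0 \<and> schwartz_plus \<phi> \<longrightarrow>
      (AE x in lborel. x > 0 \<longrightarrow> norm (S_op a t \<phi> x * complex_of_real (k1 a x)) \<le>
        C * (\<bar>t\<bar> powr (- (a + 1) / 2) + \<bar>t\<bar> powr (- 1 / 2)) *
        (\<integral>y\<in>{0<..}. norm (\<phi> y) * u1 a y \<partial>lborel))"
proof -
  obtain C where "C > 0" and kernel: "\<And>t x y. t \<noteq> 0 \<Longrightarrow> x > 0 \<Longrightarrow> y > 0 \<Longrightarrow>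
      k1 a x * (y powr a * norm (S_kernel a x y t))
        \<le> C * (\<bar>t\<bar> powr (- (a + 1) / 2) + \<bar>t\<bar> powr (- 1 / 2)) * u1 a y"
    using norm_S_kernel_weighted_le[OF assms] by blast
  have "norm (S_op a t \<phi> x * complex_of_real (k1 a x)) \<le>
      C * (\<bar>t\<bar> powr (- (a + 1) / 2) + \<bar>t\<bar> powr (- 1 / 2)) *
      (\<integral>y\<in>{0<..}. norm (\<phi> y) * u1 a y \<partial>lborel)"
    if "t \<noteq> 0" "schwartz_plus \<phi>" "x > 0" for t \<phi> x
  proof -
    have "k1 a x > 0"
      using \<open>x > 0\<close> by (simp add: k1_def)
    have "norm (S_op a t \<phi> x) \<le>
        C * (\<bar>t\<bar> powr (- (a + 1) / 2) + \<bar>t\<bar> powr (- 1 / 2)) / k1 a x *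
        (\<integral>y\<in>{0<..}. norm (\<phi> y) * u1 a y \<partial>lborel)"
      using assms \<open>k1 a x > 0\<close> that kernel
      by (intro norm_S_op_le schwartz_plus_u1_integrable) (auto simp: pos_le_divide_eq mult_ac)
    then show ?thesis
      using \<open>k1 a x > 0\<close> by (simp add: norm_mult field_simps)
  qed
  then show ?thesis
    using \<open>C > 0\<close> by blast
qed

theorem propositionP:
  shows "((a::real) \<ge> 0 \<longrightarrow>
           (\<exists>C>0. \<forall>t \<phi>. t \<noteq> 0 \<and> schwartz_plus \<phi> \<longrightarrow>
              (AE x in lborel. x > 0 \<longrightarrow>
                 norm (S_op a t \<phi> x) \<le>
                   C * \<bar>t\<bar> powr (- (a + 1) / 2) *
                   (\<integral>y\<in>{0<..}. norm (\<phi> y) * y powr a \<partial>lborel))))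
       \<and> (- 1 < a \<and> a < 0 \<longrightarrow>
           (\<exists>C>0. \<forall>t \<phi>. t \<noteq> 0 \<and> schwartz_plus \<phi> \<longrightarrow>
              (AE x in lborel. x > 0 \<longrightarrow>
                 norm (S_op a t \<phi> x * complex_of_real (k1 a x)) \<le>
                   C * (\<bar>t\<bar> powr (- (a + 1) / 2) + \<bar>t\<bar> powr (- 1 / 2)) *
                   (\<integral>y\<in>{0<..}. norm (\<phi> y) * u1 a y \<partial>lborel))))"
  using S_op_L1_Linfty_estimate S_op_weighted_L1_Linfty_estimate by blast

end
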